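(* Let $\mu,\delta,\lambda$ satisfy $\mu\ge\delta>0$ and $\lambda>-\frac{\mu(\mu+3\delta)}{\mu+2\delta}$, and let $$\beta=\min\Big\{\delta,\ \tfrac12\Big(4\mu+\delta+3\lambda-\sqrt{12\mu^2+\delta^2+9\lambda^2-4\mu\delta+20\mu\lambda-2\lambda\delta}\Big)\Big\}>0.$$ Then for every differentiable vector field $\mathbf u:\mathbb{R}^3\supset U\to\mathbb{R}^3$ it holds pointwise $$\beta|\nabla_y\mathbf u|^2\le \mu|\nabla_x\mathbf u|^2+\delta|\partial_z\mathbf u|^2+(\mu+\lambda)|\operatorname{div}_y\mathbf u|^2 .$$
   Context: Points of $\mathbb{R}^3$ are written $y=(x,z)$, $x\in\mathbb{R}^2$, $z\in\mathbb{R}$. $\nabla_x\mathbf u$ is the $3\times2$ matrix of derivatives $\partial_{x_i}u_j$ ($i=1,2$, $j=1,2,3$), $\partial_z\mathbf u$ the vector of $z$-derivatives of the components, $\nabla_y\mathbf u$ the full $3\times3$ Jacobian, $|\cdot|$ Euclidean/Frobenius norms. *)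

theory Defs
  imports "HOL-Analysis.Analysis"
begin

text \<open>Points of R^3 are y = (x,z) with x = (y$1, y$2) and z = y$3.
  For u :: real^3 \<Rightarrow> real^3, (jacobian u (at y)) $ j $ i is the partial
  derivative of the j-th component u_j with respect to the i-th coordinate.\<close>

definition grad_y_sq :: "(real^3 \<Rightarrow> real^3) \<Rightarrow> real^3 \<Rightarrow> real" where
  "grad_y_sq u y = (\<Sum>i\<in>UNIV. \<Sum>j\<in>UNIV. (jacobian u (at y) $ j $ i)^2)"

definition grad_x_sq :: "(real^3 \<Rightarrow> real^3) \<Rightarrow> real^3 \<Rightarrow> real" where
  "grad_x_sq u y = (\<Sum>i\<in>{1, 2::3}. \<Sum>j\<in>UNIV. (jacobian u (at y) $ j $ i)^2)"

definition dz_sq :: "(real^3 \<Rightarrow> real^3) \<Rightarrow> real^3 \<Rightarrow> real" where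
  "dz_sq u y = (\<Sum>j\<in>UNIV. (jacobian u (at y) $ j $ (3::3))^2)"

definition div_y :: "(real^3 \<Rightarrow> real^3) \<Rightarrow> real^3 \<Rightarrow> real" where
  "div_y u y = trace (jacobian u (at y))"

end

theory Submission
  imports Defs
begin

text \<open>The estimate is pointwise linear algebra in the Jacobian matrix. Off-diagonal
  entries only need \<beta> \<le> \<delta> \<le> \<mu>. For the diagonal entries a1, a2, a3, passing to
  a1 + a2 and a1 - a2 leaves a binary quadratic form in (a1 + a2, a3) whose trace and determinant
  are nonnegative exactly when \<beta> lies below the smaller root of \<beta>^2 - T \<beta> + D, where
  T = 4\<mu> + \<delta> + 3\<lambda> and D = \<mu>^2 + 3\<mu>\<delta> + \<mu>\<lambda> + 2\<lambda>\<delta>. The bound on \<lambda> is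
  equivalent to D > 0, which makes that root positive.\<close>

lemma quadratic_nonneg_below_smaller_root:
  fixes T D b :: real
  assumes "0 \<le> T\<^sup>2 - 4 * D" and "b \<le> (T - sqrt (T\<^sup>2 - 4 * D)) / 2"
  shows "0 \<le> b\<^sup>2 - T * b + D" and "2 * b \<le> T"
proof -
  define s where "s = sqrt (T\<^sup>2 - 4 * D)"
  have "0 \<le> s" and s_sq: "s\<^sup>2 = T\<^sup>2 - 4 * D"
    using assms(1) by (simp_all add: s_def)
  have b_le: "b \<le> (T - s) / 2"
    using assms(2) by (simp add: s_def)
  have "D = (T\<^sup>2 - s\<^sup>2) / 4"
    using s_sq by simp
  then have "b\<^sup>2 - T * b + D = (b - (T - s) / 2) * (b - (T + s) / 2)"
    by (simp add: field_simps power2_eq_square)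
  also have "0 \<le> \<dots>"
    using b_le \<open>0 \<le> s\<close> by (intro mult_nonpos_nonpos) simp_all
  finally show "0 \<le> b\<^sup>2 - T * b + D" .
  show "2 * b \<le> T"
    using b_le \<open>0 \<le> s\<close> by simp
qed

lemma smaller_root_pos:
  fixes T D :: real
  assumes "0 < D" and "0 < T"
  shows "0 < (T - sqrt (T\<^sup>2 - 4 * D)) / 2"
proof -
  have "sqrt (T\<^sup>2 - 4 * D) < sqrt (T\<^sup>2)"
    using assms(1) by (intro real_sqrt_less_mono) simp
  then show ?thesis
    using assms(2) by simp
qed

lemma quadratic_form_nonneg:
  fixes a h c x y :: real
  assumes "0 \<le> a" and "0 \<le> c" and "h\<^sup>2 \<le> a * c"
  shows "0 \<le> a * x\<^sup>2 + 2 * h * x * y + c * y\<^sup>2"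
proof (cases "a = 0")
  case True
  with assms(3) have "h = 0"
    by simp
  with True assms(2) show ?thesis
    by simp
next
  case False
  with assms(1) have "0 < a"
    by simp
  have "a * (a * x\<^sup>2 + 2 * h * x * y + c * y\<^sup>2) = (a * x + h * y)\<^sup>2 + (a * c - h\<^sup>2) * y\<^sup>2"
    by (simp add: algebra_simps power2_eq_square)
  also have "0 \<le> \<dots>"
    using assms(3) by simp
  finally show ?thesis
    using \<open>0 < a\<close> by (simp add: zero_le_mult_iff)
qed

lemma diagonal_quadratic_bound:
  fixes mu delta lam b a1 a2 a3 :: real
  assumes "b \<le> mu" and "2 * b \<le> 4 * mu + delta + 3 * lam"
    and "0 \<le> b\<^sup>2 - (4 * mu + delta + 3 * lam) * b + (mu\<^sup>2 + 3 * mu * delta + mu * lam + 2 * lam * delta)"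
  shows "b * (a1\<^sup>2 + a2\<^sup>2 + a3\<^sup>2) \<le> mu * (a1\<^sup>2 + a2\<^sup>2) + delta * a3\<^sup>2 + (mu + lam) * (a1 + a2 + a3)\<^sup>2"
proof -
  define P where "P = 3 * mu + 2 * lam - b"
  define Q where "Q = delta + mu + lam - b"
  have "P * Q = 2 * (mu + lam)\<^sup>2
      + (b\<^sup>2 - (4 * mu + delta + 3 * lam) * b + (mu\<^sup>2 + 3 * mu * delta + mu * lam + 2 * lam * delta))"
    by (simp add: P_def Q_def algebra_simps power2_eq_square)
  with assms(3) have det: "2 * (mu + lam)\<^sup>2 \<le> P * Q"
    by linarith
  then have "0 \<le> P * Q"
    by (smt (verit) zero_le_power2)
  moreover have "0 \<le> P + Q"
    using assms(2) by (simp add: P_def Q_def)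
  ultimately have "0 \<le> P" and "0 \<le> Q"
    by (auto simp: zero_le_mult_iff)
  have "0 \<le> (P / 2) * (a1 + a2)\<^sup>2 + 2 * (mu + lam) * (a1 + a2) * a3 + Q * a3\<^sup>2"
    using \<open>0 \<le> P\<close> \<open>0 \<le> Q\<close> det by (intro quadratic_form_nonneg) simp_all
  moreover have "0 \<le> (mu - b) * (a1 - a2)\<^sup>2 / 2"
    using assms(1) by simp
  moreover have "mu * (a1\<^sup>2 + a2\<^sup>2) + delta * a3\<^sup>2 + (mu + lam) * (a1 + a2 + a3)\<^sup>2 - b * (a1\<^sup>2 + a2\<^sup>2 + a3\<^sup>2)
      = (mu - b) * (a1 - a2)\<^sup>2 / 2
        + ((P / 2) * (a1 + a2)\<^sup>2 + 2 * (mu + lam) * (a1 + a2) * a3 + Q * a3\<^sup>2)"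
    by (simp add: P_def Q_def field_simps power2_eq_square)
  ultimately show ?thesis
    by linarith
qed

lemma matrix_frobenius_bound:
  fixes M :: "real^3^3" and mu delta lam b :: real
  assumes "b \<le> delta" and "delta \<le> mu" and "2 * b \<le> 4 * mu + delta + 3 * lam"
    and "0 \<le> b\<^sup>2 - (4 * mu + delta + 3 * lam) * b + (mu\<^sup>2 + 3 * mu * delta + mu * lam + 2 * lam * delta)"
  shows "b * (\<Sum>i\<in>UNIV. \<Sum>j\<in>UNIV. (M $ j $ i)\<^sup>2)
    \<le> mu * (\<Sum>i\<in>{1, 2::3}. \<Sum>j\<in>UNIV. (M $ j $ i)\<^sup>2) + delta * (\<Sum>j\<in>UNIV. (M $ j $ 3)\<^sup>2)
      + (mu + lam) * (trace M)\<^sup>2"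
proof -
  have "b \<le> mu"
    using assms(1,2) by simp
  have off_diagonal: "b * (M $ j $ i)\<^sup>2 \<le> c * (M $ j $ i)\<^sup>2" if "b \<le> c" for c i j
    using that by (simp add: mult_right_mono)
  have "b * ((M$1$1)\<^sup>2 + (M$2$2)\<^sup>2 + (M$3$3)\<^sup>2)
      \<le> mu * ((M$1$1)\<^sup>2 + (M$2$2)\<^sup>2) + delta * (M$3$3)\<^sup>2 + (mu + lam) * (M$1$1 + M$2$2 + M$3$3)\<^sup>2"
    using \<open>b \<le> mu\<close> assms(3,4) by (rule diagonal_quadratic_bound)
  moreover note off_diagonal[OF \<open>b \<le> mu\<close>, of 2 1] off_diagonal[OF \<open>b \<le> mu\<close>, of 3 1]
    off_diagonal[OF \<open>b \<le> mu\<close>, of 1 2] off_diagonal[OF \<open>b \<le> mu\<close>, of 3 2]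
    off_diagonal[OF assms(1), of 1 3] off_diagonal[OF assms(1), of 2 3]
  ultimately show ?thesis
    by (simp add: sum_3 trace_def algebra_simps)
qed

lemma lam_bound_imp_coeffs_pos:
  fixes mu delta lam :: real
  assumes "delta \<le> mu" and "0 < delta" and "- (mu * (mu + 3 * delta) / (mu + 2 * delta)) < lam"
  shows "0 < mu\<^sup>2 + 3 * mu * delta + mu * lam + 2 * lam * delta" and "0 < 4 * mu + delta + 3 * lam"
proof -
  have "0 < mu + 2 * delta"
    using assms(1,2) by simp
  with assms(3) have "- (mu * (mu + 3 * delta)) < lam * (mu + 2 * delta)"
    by (simp add: field_simps)
  then show D_pos: "0 < mu\<^sup>2 + 3 * mu * delta + mu * lam + 2 * lam * delta"
    by (simp add: algebra_simps power2_eq_square)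
  have "(mu + 2 * delta) * (4 * mu + delta + 3 * lam)
      = 3 * (mu\<^sup>2 + 3 * mu * delta + mu * lam + 2 * lam * delta) + (mu\<^sup>2 + 2 * delta\<^sup>2)"
    by (simp add: algebra_simps power2_eq_square)
  also have "0 < \<dots>"
    using D_pos assms(2) by (intro add_pos_pos add_nonneg_pos) simp_all
  finally show "0 < 4 * mu + delta + 3 * lam"
    using \<open>0 < mu + 2 * delta\<close> by (simp add: zero_less_mult_iff)
qed

theorem corollary2p2:
  fixes mu delta lam :: real and U :: "(real^3) set" and u :: "real^3 \<Rightarrow> real^3"
  assumes "mu \<ge> delta" and "delta > 0"
    and "lam > - (mu * (mu + 3 * delta) / (mu + 2 * delta))"
    and "open U" and "u differentiable_on U"
  shows "let \<beta> = min delta ((4 * mu + delta + 3 * lam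
             - sqrt (12 * mu^2 + delta^2 + 9 * lam^2 - 4 * mu * delta + 20 * mu * lam - 2 * lam * delta)) / 2)
         in \<beta> > 0 \<and>
            (\<forall>y\<in>U. \<beta> * grad_y_sq u y
               \<le> mu * grad_x_sq u y + delta * dz_sq u y + (mu + lam) * (div_y u y)^2)"
proof -
  define T where "T = 4 * mu + delta + 3 * lam"
  define D where "D = mu\<^sup>2 + 3 * mu * delta + mu * lam + 2 * lam * delta"
  have disc: "12 * mu^2 + delta^2 + 9 * lam^2 - 4 * mu * delta + 20 * mu * lam - 2 * lam * delta
      = T\<^sup>2 - 4 * D"
    by (simp add: T_def D_def algebra_simps power2_eq_square)
  have "T\<^sup>2 - 4 * D = (2 * mu + lam - delta)\<^sup>2 + 8 * (mu + lam)\<^sup>2"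
    by (simp add: T_def D_def algebra_simps power2_eq_square)
  then have "0 \<le> T\<^sup>2 - 4 * D"
    by simp
  have "0 < D" and "0 < T"
    using lam_bound_imp_coeffs_pos[OF assms(1-3)] by (simp_all add: T_def D_def)
  define \<beta> where "\<beta> = min delta ((T - sqrt (T\<^sup>2 - 4 * D)) / 2)"
  have "0 < \<beta>"
    using assms(2) smaller_root_pos[OF \<open>0 < D\<close> \<open>0 < T\<close>] by (simp add: \<beta>_def)
  have "\<beta> \<le> (T - sqrt (T\<^sup>2 - 4 * D)) / 2"
    unfolding \<beta>_def by (rule min.cobounded2)
  note root = quadratic_nonneg_below_smaller_root[OF \<open>0 \<le> T\<^sup>2 - 4 * D\<close> this]
  \<comment> \<open>The bound holds for every matrix.\<close>
  have pointwise: "\<beta> * grad_y_sq u y \<le> mu * grad_x_sq u y + delta * dz_sq u y + (mu + lam) * (div_y u y)\<^sup>2" for y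
    unfolding grad_y_sq_def grad_x_sq_def dz_sq_def div_y_def
    using assms(1) root by (intro matrix_frobenius_bound) (simp_all add: \<beta>_def T_def D_def)
  show ?thesis
    unfolding Let_def disc T_def[symmetric] \<beta>_def[symmetric] using \<open>0 < \<beta>\<close> pointwise by simp
qed

end
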